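(* Let $T^{2,2}$ and $T^{2,3}$ be the policies with $T^{2,2}_i=\mathcal{R}_{2,2}(T_i^* )$ and $T^{2,3}_i=\mathcal{R}_{2,3}(T_i^* )$ for every $i\in[n]$. Both are resource-feasible and $\min\{F(T^{2,2}),F(T^{2,3})\}\le 1.3776\cdot\mathrm{OPT}(P)$.
   Context: An instance consists of integers $n\ge 1$, $D\ge 1$; a joint ordering cost $K_0>0$; for each commodity $i\in[n]$ an ordering cost $K_i>0$ and a holding coefficient $H_i>0$; and resource coefficients $\alpha_{id}\ge 0$. A policy is $T=(T_1,\dots,T_n)\in\mathbb{R}_{>0}^n$; it is resource-feasible if $\sum_{i}\alpha_{id}/T_i\le 1$ for every $d\in[D]$. For $g>0$, $\Delta\ge 0$, $\mathcal{M}_{g,\Delta}=\{0,g,\dots,\lfloor\Delta/g\rfloor g\}$; $N(T,\Delta)=|\bigcup_{i}\mathcal{M}_{T_i,\Delta}|$; $J(T)=K_0\limsup_{\Delta\to\infty}N(T,\Delta)/\Delta$; $F(T)=J(T)+\sum_i(K_i/T_i+H_iT_i)$. The convex relaxation (P) is: minimize $K_0/T_{\min}+\sum_{i\in[n]}(K_i/T_i+H_iT_i)$ over $(T_{\min},T_1,\dots,T_n)$ subject to $T_i\ge T_{\min}\ge0$ for all $i$ and $\sum_i\alpha_{id}/T_i\le1$ for all $d$. $\mathrm{OPT}(P)$ is its optimal value and $T^*=(T^*_{\min},T^*_1,\dots,T^*_n)$ is a fixed optimal solution (with $T^*_{\min}>0$). For integers $m\ge2$, $k\ge1$: $\mathcal{G}_{m,k}=\{m^{p/k}T^*_{\min}:p\in\mathbb{Z}\}$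 and $\mathcal{R}_{m,k}(t)=\min\{g\in\mathcal{G}_{m,k}:g>t\}$ for $t>0$. *)

theory Defs
  imports "HOL-Analysis.Analysis"
begin

text \<open>Commodities are indexed by i < n, resources by d < D.
  Policies are functions nat => real (only the values at i < n matter).\<close>

definition resource_feasible ::
  "nat \<Rightarrow> nat \<Rightarrow> (nat \<Rightarrow> nat \<Rightarrow> real) \<Rightarrow> (nat \<Rightarrow> real) \<Rightarrow> bool" where
  "resource_feasible n D \<alpha> T \<longleftrightarrow>
     (\<forall>i<n. T i > 0) \<and> (\<forall>d<D. (\<Sum>i<n. \<alpha> i d / T i) \<le> 1)"

definition mults :: "real \<Rightarrow> real \<Rightarrow> real set" where
  "mults g \<Delta> = {of_int k * g | k::int. 0 \<le> k \<and> k \<le> \<lfloor>\<Delta> / g\<rfloor>}"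

definition Npts :: "nat \<Rightarrow> (nat \<Rightarrow> real) \<Rightarrow> real \<Rightarrow> nat" where
  "Npts n T \<Delta> = card (\<Union>i<n. mults (T i) \<Delta>)"

definition Jcost :: "real \<Rightarrow> nat \<Rightarrow> (nat \<Rightarrow> real) \<Rightarrow> ereal" where
  "Jcost K0 n T = ereal K0 * Limsup at_top (\<lambda>\<Delta>::real. ereal (real (Npts n T \<Delta>) / \<Delta>))"

definition Fcost :: "real \<Rightarrow> (nat \<Rightarrow> real) \<Rightarrow> (nat \<Rightarrow> real) \<Rightarrow> nat \<Rightarrow> (nat \<Rightarrow> real) \<Rightarrow> ereal" where
  "Fcost K0 K H n T = Jcost K0 n T + ereal (\<Sum>i<n. K i / T i + H i * T i)"

text \<open>Points with Tmin = 0 have objective +infinity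
  in the paper (K0/0); they never matter for the infimum or for optimality, so the feasible
  region is restricted to Tmin > 0 (Isabelle has x/0 = 0).\<close>
definition P_feasible ::
  "nat \<Rightarrow> nat \<Rightarrow> (nat \<Rightarrow> nat \<Rightarrow> real) \<Rightarrow> real \<Rightarrow> (nat \<Rightarrow> real) \<Rightarrow> bool" where
  "P_feasible n D \<alpha> Tmin T \<longleftrightarrow>
     Tmin > 0 \<and> (\<forall>i<n. T i \<ge> Tmin) \<and> (\<forall>d<D. (\<Sum>i<n. \<alpha> i d / T i) \<le> 1)"

definition P_obj :: "real \<Rightarrow> (nat \<Rightarrow> real) \<Rightarrow> (nat \<Rightarrow> real) \<Rightarrow> nat \<Rightarrow> real \<Rightarrow> (nat \<Rightarrow> real) \<Rightarrow> real" where
  "P_obj K0 K H n Tmin T = K0 / Tmin + (\<Sum>i<n. K i / T i + H i * T i)"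

definition OPT_P :: "nat \<Rightarrow> nat \<Rightarrow> real \<Rightarrow> (nat \<Rightarrow> real) \<Rightarrow> (nat \<Rightarrow> real) \<Rightarrow> (nat \<Rightarrow> nat \<Rightarrow> real) \<Rightarrow> real" where
  "OPT_P n D K0 K H \<alpha> = (INF x \<in> {(Tmin, T). P_feasible n D \<alpha> Tmin T}. P_obj K0 K H n (fst x) (snd x))"

definition P_optimal ::
  "nat \<Rightarrow> nat \<Rightarrow> real \<Rightarrow> (nat \<Rightarrow> real) \<Rightarrow> (nat \<Rightarrow> real) \<Rightarrow> (nat \<Rightarrow> nat \<Rightarrow> real) \<Rightarrow> real \<Rightarrow> (nat \<Rightarrow> real) \<Rightarrow> bool" where
  "P_optimal n D K0 K H \<alpha> Tmin T \<longleftrightarrow> P_feasible n D \<alpha> Tmin T \<and>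
     (\<forall>Tmin' T'. P_feasible n D \<alpha> Tmin' T' \<longrightarrow> P_obj K0 K H n Tmin T \<le> P_obj K0 K H n Tmin' T')"

definition grid :: "nat \<Rightarrow> nat \<Rightarrow> real \<Rightarrow> real set" where
  "grid m k Tmin = {real m powr (real_of_int p / real k) * Tmin | p::int. True}"

definition round_up :: "nat \<Rightarrow> nat \<Rightarrow> real \<Rightarrow> real \<Rightarrow> real" where
  "round_up m k Tmin t = Inf {g \<in> grid m k Tmin. g > t}"

end

theory Submission
  imports Defs
begin

(* Rounding T* up to the grid G_{m,k} multiplies each T_i by a factor in (1, m^(1/k)], so the
   separable cost sum_i (K_i/T_i + H_i T_i) grows by at most the factor m^(1/k) and the resource
   constraints remain satisfied.  Because T_i >= T_min, every rounded period has the form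
   m^q * m^(j/k) T_min with q >= 0 and 1 <= j <= k, so all order instants lie on the k lattices
   with spacings m^(j/k) T_min, and the joint cost is at most (K_0/T_min) sum_j m^(-j/k).
   Writing OPT(P) = K_0/T_min + S, the cost of T^{2,k} is therefore at most
   sigma_k K_0/T_min + 2^(1/k) S, where sigma_k = sum_{j=1..k} 2^(-j/k).  For k = 2 and k = 3,
   the combination of these two bounds with weights 0.7624 and 0.2376 is at most 1.3776 OPT(P),
   and the minimum of the two costs is at most any convex combination of them. *)

lemma less_grid_point_iff:
  fixes m k :: nat and Tmin t :: real and q :: int
  assumes m: "m \<ge> 2" and k: "k \<ge> 1" and Tmin: "Tmin > 0" and t: "t > 0"
  shows "t < real m powr (of_int q / real k) * Tmin
           \<longleftrightarrow> \<lfloor>real k * log m (t / Tmin)\<rfloor> + 1 \<le> q"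
proof -
  let ?L = "log m (t / Tmin)"
  have "t < real m powr (of_int q / real k) * Tmin \<longleftrightarrow> real m powr ?L < real m powr (of_int q / real k)"
    using m Tmin t by (simp add: pos_divide_less_eq)
  also have "\<dots> \<longleftrightarrow> real k * ?L < of_int q"
    using m k by (simp add: field_simps)
  also have "\<dots> \<longleftrightarrow> \<lfloor>real k * ?L\<rfloor> + 1 \<le> q"
    by linarith
  finally show ?thesis .
qed

lemma round_up_eq:
  fixes m k :: nat and Tmin t :: real
  assumes m: "m \<ge> 2" and k: "k \<ge> 1" and Tmin: "Tmin > 0" and t: "t > 0"
  shows "round_up m k Tmin t
           = real m powr (of_int (\<lfloor>real k * log m (t / Tmin)\<rfloor> + 1) / real k) * Tmin"
    (is "_ = real m powr (of_int ?p / _) * _")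
  unfolding round_up_def
proof (rule cInf_eq_minimum)
  show "real m powr (of_int ?p / real k) * Tmin \<in> {g \<in> grid m k Tmin. t < g}"
    using less_grid_point_iff[OF assms, of ?p] unfolding grid_def by blast
next
  fix g assume "g \<in> {g \<in> grid m k Tmin. t < g}"
  then obtain q :: int where g: "g = real m powr (of_int q / real k) * Tmin" and "t < g"
    unfolding grid_def by blast
  then have "?p \<le> q"
    using less_grid_point_iff[OF assms] by blast
  then show "real m powr (of_int ?p / real k) * Tmin \<le> g"
    unfolding g using m k Tmin by (simp add: divide_right_mono)
qed

lemma round_up_gt:
  fixes m k :: nat and Tmin t :: real
  assumes "m \<ge> 2" and "k \<ge> 1" and "Tmin > 0" and "t > 0"
  shows "t < round_up m k Tmin t"
  unfolding round_up_eq[OF assms] by (simp only: less_grid_point_iff[OF assms])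

lemma round_up_le:
  fixes m k :: nat and Tmin t :: real
  assumes m: "m \<ge> 2" and k: "k \<ge> 1" and Tmin: "Tmin > 0" and t: "t > 0"
  shows "round_up m k Tmin t \<le> real m powr (1 / real k) * t"
proof -
  let ?L = "log m (t / Tmin)"
  have "of_int (\<lfloor>real k * ?L\<rfloor> + 1) / real k \<le> ?L + 1 / real k"
    using k by (simp add: field_simps)
  then have "round_up m k Tmin t \<le> real m powr (?L + 1 / real k) * Tmin"
    unfolding round_up_eq[OF assms] using m Tmin by simp
  also have "\<dots> = real m powr (1 / real k) * t"
    using m Tmin t by (simp add: powr_add)
  finally show ?thesis .
qed

lemma round_up_eq_multiple:
  fixes m k :: nat and Tmin t :: real
  assumes m: "m \<ge> 2" and k: "k \<ge> 1" and Tmin: "Tmin > 0" and t: "t \<ge> Tmin"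
  obtains j q :: nat where "j \<in> {1..k}"
    and "round_up m k Tmin t = real (m ^ q) * (real m powr (real j / real k) * Tmin)"
proof -
  define r where "r = \<lfloor>real k * log m (t / Tmin)\<rfloor>"
  define q where "q = r div int k"
  define j where "j = r mod int k + 1"
  have "log m (t / Tmin) \<ge> 0" and k_pos: "int k > 0"
    using m k Tmin t by simp_all
  then have "q \<ge> 0"
    unfolding q_def r_def by (simp add: pos_imp_zdiv_nonneg_iff)
  moreover have "1 \<le> j" "j \<le> int k"
    using pos_mod_sign[OF k_pos, of r] pos_mod_bound[OF k_pos, of r] unfolding j_def by linarith+
  moreover have "r + 1 = int k * q + j"
    unfolding q_def j_def by simp
  then have "of_int (r + 1) / real k = real (nat q) + real (nat j) / real k"
    using k \<open>q \<ge> 0\<close> \<open>1 \<le> j\<close> by (simp add: field_simps)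
  then have "round_up m k Tmin t = real (m ^ nat q) * (real m powr (real (nat j) / real k) * Tmin)"
    unfolding round_up_eq[OF m k Tmin order.strict_trans2[OF Tmin t]] r_def[symmetric]
    using m by (simp add: powr_add powr_realpow)
  ultimately show ?thesis
    by (intro that[of "nat j" "nat q"]) auto
qed

lemma finite_mults: "finite (mults g \<Delta>)"
proof -
  have "mults g \<Delta> = (\<lambda>c. of_int c * g) ` {0..\<lfloor>\<Delta> / g\<rfloor>}"
    unfolding mults_def by auto
  then show ?thesis
    by simp
qed

lemma card_mults_le:
  fixes g \<Delta> :: real
  assumes "g > 0" and "\<Delta> \<ge> 0"
  shows "real (card (mults g \<Delta>)) \<le> \<Delta> / g + 1"
proof -
  have "mults g \<Delta> = (\<lambda>c. of_int c * g) ` {0..\<lfloor>\<Delta> / g\<rfloor>}"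
    unfolding mults_def by auto
  then have "real (card (mults g \<Delta>)) \<le> real (nat (\<lfloor>\<Delta> / g\<rfloor> + 1))"
    using card_image_le[of "{0..\<lfloor>\<Delta> / g\<rfloor>}"] by simp
  also have "\<dots> = of_int \<lfloor>\<Delta> / g\<rfloor> + 1"
    using assms by simp
  finally show ?thesis
    by linarith
qed

lemma mults_multiple_subset:
  fixes g \<Delta> :: real and c :: nat
  assumes "g > 0" and "c > 0"
  shows "mults (real c * g) \<Delta> \<subseteq> mults g \<Delta>"
proof
  fix x assume "x \<in> mults (real c * g) \<Delta>"
  then obtain a :: int where x_eq: "x = of_int a * (real c * g)"
    and "0 \<le> a" and a_le: "a \<le> \<lfloor>\<Delta> / (real c * g)\<rfloor>"
    unfolding mults_def by blast
  have x: "x = of_int (a * int c) * g"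
    using x_eq by simp
  have "of_int a \<le> \<Delta> / (real c * g)"
    using a_le by (simp add: le_floor_iff)
  then have "a * int c \<le> \<lfloor>\<Delta> / g\<rfloor>"
    using assms by (simp add: le_floor_iff field_simps)
  moreover have "0 \<le> a * int c"
    using \<open>0 \<le> a\<close> by simp
  ultimately show "x \<in> mults g \<Delta>"
    unfolding mults_def x by blast
qed

lemma Npts_le_of_multiples:
  fixes n :: nat and T :: "nat \<Rightarrow> real" and g :: "'a \<Rightarrow> real" and J :: "'a set"
  assumes J: "finite J" and g_pos: "\<And>j. j \<in> J \<Longrightarrow> g j > 0" and "\<Delta> \<ge> 0"
    and multiple: "\<And>i. i < n \<Longrightarrow> \<exists>j\<in>J. \<exists>c>0. T i = real c * g j"
  shows "real (Npts n T \<Delta>) \<le> \<Delta> * (\<Sum>j\<in>J. 1 / g j) + card J"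
proof -
  have sub: "(\<Union>i<n. mults (T i) \<Delta>) \<subseteq> (\<Union>j\<in>J. mults (g j) \<Delta>)"
  proof
    fix x assume "x \<in> (\<Union>i<n. mults (T i) \<Delta>)"
    then obtain i where "i < n" and x: "x \<in> mults (T i) \<Delta>"
      by blast
    then obtain j c where j: "j \<in> J" and "c > 0" and "T i = real c * g j"
      using multiple by blast
    then have "mults (T i) \<Delta> \<subseteq> mults (g j) \<Delta>"
      using mults_multiple_subset[OF g_pos] by simp
    then show "x \<in> (\<Union>j\<in>J. mults (g j) \<Delta>)"
      using x j by blast
  qed
  have "Npts n T \<Delta> \<le> card (\<Union>j\<in>J. mults (g j) \<Delta>)"
    unfolding Npts_def using J by (intro card_mono[OF _ sub]) (simp add: finite_mults)
  also have "\<dots> \<le> (\<Sum>j\<in>J. card (mults (g j) \<Delta>))"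
    by (rule card_UN_le[OF J])
  finally have "real (Npts n T \<Delta>) \<le> (\<Sum>j\<in>J. real (card (mults (g j) \<Delta>)))"
    unfolding of_nat_sum[symmetric] by (rule of_nat_mono)
  also have "\<dots> \<le> (\<Sum>j\<in>J. \<Delta> / g j + 1)"
    using g_pos card_mults_le \<open>\<Delta> \<ge> 0\<close> by (intro sum_mono) auto
  also have "\<dots> = \<Delta> * (\<Sum>j\<in>J. 1 / g j) + card J"
    by (simp add: sum.distrib sum_distrib_left)
  finally show ?thesis .
qed

lemma Jcost_le_of_multiples:
  fixes n :: nat and T :: "nat \<Rightarrow> real" and g :: "'a \<Rightarrow> real" and J :: "'a set"
  assumes "K0 \<ge> 0" and J: "finite J" and g_pos: "\<And>j. j \<in> J \<Longrightarrow> g j > 0"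
    and multiple: "\<And>i. i < n \<Longrightarrow> \<exists>j\<in>J. \<exists>c>0. T i = real c * g j"
  shows "Jcost K0 n T \<le> ereal (K0 * (\<Sum>j\<in>J. 1 / g j))"
proof -
  let ?c = "\<Sum>j\<in>J. 1 / g j"
  have "\<forall>\<^sub>F \<Delta> in at_top. ereal (real (Npts n T \<Delta>) / \<Delta>) \<le> ereal (?c + card J / \<Delta>)"
    using eventually_gt_at_top[of "0::real"]
  proof eventually_elim
    case (elim \<Delta>)
    then show ?case
      using Npts_le_of_multiples[OF J g_pos _ multiple, of \<Delta>] by (simp add: field_simps)
  qed
  then have "Limsup at_top (\<lambda>\<Delta>. ereal (real (Npts n T \<Delta>) / \<Delta>))
               \<le> Limsup at_top (\<lambda>\<Delta>::real. ereal (?c + card J / \<Delta>))"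
    by (rule Limsup_mono)
  also have "\<dots> = ereal ?c"
  proof (rule lim_imp_Limsup)
    have "((\<lambda>\<Delta>::real. ?c + card J / \<Delta>) \<longlongrightarrow> ?c) at_top"
      using tendsto_add[OF tendsto_const tendsto_divide_0[OF tendsto_const
          filterlim_at_top_imp_at_infinity[OF filterlim_ident]]] by simp
    then show "((\<lambda>\<Delta>. ereal (?c + card J / \<Delta>)) \<longlongrightarrow> ereal ?c) at_top"
      by (simp add: lim_ereal)
  qed simp
  finally have "Jcost K0 n T \<le> ereal K0 * ereal ?c"
    unfolding Jcost_def by (rule ereal_mult_left_mono) (use \<open>K0 \<ge> 0\<close> in simp)
  then show ?thesis
    by simp
qed

definition joint_order_factor :: "nat \<Rightarrow> nat \<Rightarrow> real" where
  "joint_order_factor m k = (\<Sum>j = 1..k. 1 / real m powr (real j / real k))"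

lemma Jcost_round_up_le:
  fixes m k n :: nat and K0 Tmin :: real and T :: "nat \<Rightarrow> real"
  assumes m: "m \<ge> 2" and k: "k \<ge> 1" and Tmin: "Tmin > 0" and "K0 \<ge> 0"
    and T_ge: "\<And>i. i < n \<Longrightarrow> T i \<ge> Tmin"
  shows "Jcost K0 n (\<lambda>i. round_up m k Tmin (T i)) \<le> ereal (K0 / Tmin * joint_order_factor m k)"
proof -
  let ?g = "\<lambda>j::nat. real m powr (real j / real k) * Tmin"
  have "Jcost K0 n (\<lambda>i. round_up m k Tmin (T i)) \<le> ereal (K0 * (\<Sum>j\<in>{1..k}. 1 / ?g j))"
  proof (rule Jcost_le_of_multiples)
    fix i assume "i < n"
    then obtain j q where "j \<in> {1..k}" and "round_up m k Tmin (T i) = real (m ^ q) * ?g j"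
      using round_up_eq_multiple[OF m k Tmin T_ge] by blast
    moreover have "m ^ q > 0"
      using m by simp
    ultimately show "\<exists>j\<in>{1..k}. \<exists>c>0. round_up m k Tmin (T i) = real c * ?g j"
      by blast
  qed (use assms in simp_all)
  also have "K0 * (\<Sum>j\<in>{1..k}. 1 / ?g j) = K0 / Tmin * joint_order_factor m k"
    unfolding joint_order_factor_def by (simp add: sum_distrib_left sum_divide_distrib mult.commute)
  finally show ?thesis .
qed

lemma resource_feasible_round_up:
  fixes m k n D :: nat and Tmin :: real and T :: "nat \<Rightarrow> real" and \<alpha> :: "nat \<Rightarrow> nat \<Rightarrow> real"
  assumes m: "m \<ge> 2" and k: "k \<ge> 1" and Tmin: "Tmin > 0"
    and T_pos: "\<And>i. i < n \<Longrightarrow> T i > 0"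
    and \<alpha>_nonneg: "\<And>i d. i < n \<Longrightarrow> d < D \<Longrightarrow> \<alpha> i d \<ge> 0"
    and load: "\<And>d. d < D \<Longrightarrow> (\<Sum>i<n. \<alpha> i d / T i) \<le> 1"
  shows "resource_feasible n D \<alpha> (\<lambda>i. round_up m k Tmin (T i))"
  unfolding resource_feasible_def
proof (intro conjI allI impI)
  fix i assume "i < n"
  then show "round_up m k Tmin (T i) > 0"
    using round_up_gt[OF m k Tmin T_pos] T_pos by (meson less_trans)
next
  fix d assume "d < D"
  have "(\<Sum>i<n. \<alpha> i d / round_up m k Tmin (T i)) \<le> (\<Sum>i<n. \<alpha> i d / T i)"
  proof (rule sum_mono)
    fix i assume "i \<in> {..<n}"
    then have i: "i < n"
      by simp
    show "\<alpha> i d / round_up m k Tmin (T i) \<le> \<alpha> i d / T i"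
      using round_up_gt[OF m k Tmin T_pos[OF i]] T_pos[OF i] \<alpha>_nonneg[OF i \<open>d < D\<close>]
      by (intro divide_left_mono) auto
  qed
  then show "(\<Sum>i<n. \<alpha> i d / round_up m k Tmin (T i)) \<le> 1"
    using load[OF \<open>d < D\<close>] by linarith
qed

lemma separable_cost_round_up_le:
  fixes m k n :: nat and Tmin :: real and K H T :: "nat \<Rightarrow> real"
  assumes m: "m \<ge> 2" and k: "k \<ge> 1" and Tmin: "Tmin > 0"
    and T_pos: "\<And>i. i < n \<Longrightarrow> T i > 0"
    and K_nonneg: "\<And>i. i < n \<Longrightarrow> K i \<ge> 0" and H_nonneg: "\<And>i. i < n \<Longrightarrow> H i \<ge> 0"
  shows "(\<Sum>i<n. K i / round_up m k Tmin (T i) + H i * round_up m k Tmin (T i))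
           \<le> real m powr (1 / real k) * (\<Sum>i<n. K i / T i + H i * T i)"
  unfolding sum_distrib_left
proof (rule sum_mono)
  fix i assume "i \<in> {..<n}"
  then have i: "i < n"
    by simp
  let ?R = "round_up m k Tmin (T i)" and ?r = "real m powr (1 / real k)"
  have "?r \<ge> 1"
    using m by (intro ge_one_powr_ge_zero) auto
  have "K i / ?R \<le> K i / T i"
    using round_up_gt[OF m k Tmin T_pos[OF i]] T_pos[OF i] K_nonneg[OF i]
    by (intro divide_left_mono) auto
  also have "\<dots> \<le> ?r * (K i / T i)"
    using mult_right_mono[OF \<open>?r \<ge> 1\<close>, of "K i / T i"] T_pos[OF i] K_nonneg[OF i] by simp
  finally have "K i / ?R \<le> ?r * (K i / T i)" .
  moreover have "H i * ?R \<le> H i * (?r * T i)"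
    using round_up_le[OF m k Tmin T_pos[OF i]] H_nonneg[OF i] by (rule mult_left_mono)
  ultimately show "K i / ?R + H i * ?R \<le> ?r * (K i / T i + H i * T i)"
    by (simp add: algebra_simps)
qed

lemma Fcost_round_up_le:
  fixes m k n :: nat and K0 Tmin :: real and K H T :: "nat \<Rightarrow> real"
  assumes m: "m \<ge> 2" and k: "k \<ge> 1" and Tmin: "Tmin > 0" and "K0 \<ge> 0"
    and T_ge: "\<And>i. i < n \<Longrightarrow> T i \<ge> Tmin"
    and "\<And>i. i < n \<Longrightarrow> K i \<ge> 0" and "\<And>i. i < n \<Longrightarrow> H i \<ge> 0"
  shows "Fcost K0 K H n (\<lambda>i. round_up m k Tmin (T i))
           \<le> ereal (K0 / Tmin * joint_order_factor m k
                    + real m powr (1 / real k) * (\<Sum>i<n. K i / T i + H i * T i))"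
proof -
  have "T i > 0" if "i < n" for i
    using T_ge[OF that] Tmin by linarith
  then have "(\<Sum>i<n. K i / round_up m k Tmin (T i) + H i * round_up m k Tmin (T i))
               \<le> real m powr (1 / real k) * (\<Sum>i<n. K i / T i + H i * T i)"
    using assms by (intro separable_cost_round_up_le) auto
  then show ?thesis
    unfolding Fcost_def plus_ereal.simps(1)[symmetric]
    using Jcost_round_up_le[OF assms(1-5)] by (intro add_mono) auto
qed

lemma OPT_P_eq_P_obj:
  assumes "P_optimal n D K0 K H \<alpha> Tmin T"
  shows "OPT_P n D K0 K H \<alpha> = P_obj K0 K H n Tmin T"
  unfolding OPT_P_def
proof (rule cInf_eq_minimum)
  show "P_obj K0 K H n Tmin T
          \<in> (\<lambda>x. P_obj K0 K H n (fst x) (snd x)) ` {(Tmin, T). P_feasible n D \<alpha> Tmin T}"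
    using assms unfolding P_optimal_def by force
next
  fix y assume "y \<in> (\<lambda>x. P_obj K0 K H n (fst x) (snd x)) ` {(Tmin, T). P_feasible n D \<alpha> Tmin T}"
  then show "P_obj K0 K H n Tmin T \<le> y"
    using assms unfolding P_optimal_def by auto
qed

lemma powr_le_of_power_le:
  fixes x b :: real and j k :: nat
  assumes "x > 0" and "b \<ge> 0" and "k > 0" and "x ^ j \<le> b ^ k"
  shows "x powr (real j / real k) \<le> b"
proof -
  have "(x powr (real j / real k)) ^ k = x ^ j"
    using assms by (simp add: powr_power powr_realpow)
  then show ?thesis
    using assms power_mono_iff[of "x powr (real j / real k)" b k] by simp
qed

lemma inverse_powr_le_of_power_le:
  fixes x b :: real and j k :: nat
  assumes "x > 0" and "b \<ge> 0" and "k > 0" and "1 \<le> b ^ k * x ^ j"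
  shows "1 / x powr (real j / real k) \<le> b"
proof -
  have "(b * x powr (real j / real k)) ^ k = b ^ k * x ^ j"
    using assms by (simp add: power_mult_distrib powr_power powr_realpow)
  then have "1 \<le> b * x powr (real j / real k)"
    using assms power_mono_iff[of 1 "b * x powr (real j / real k)" k] by simp
  then show ?thesis
    using assms by (simp add: divide_le_eq mult.commute)
qed

(* The weight 0.7624 roughly equalises the two weighted coefficients (both are about 1.3775). *)
lemma joint_order_factor_weighted_le:
  "0.7624 * joint_order_factor 2 2 + 0.2376 * joint_order_factor 2 3 \<le> (1.3776::real)"
proof -
  define u v w :: real
    where "u = 1 / 2 powr (1 / 2)" and "v = 1 / 2 powr (1 / 3)" and "w = 1 / 2 powr (2 / 3)"
  have "joint_order_factor 2 2 = u + 1 / 2"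
    unfolding u_def by (simp add: joint_order_factor_def numeral_2_eq_2)
  moreover have "joint_order_factor 2 3 = v + w + 1 / 2"
    unfolding v_def w_def by (simp add: joint_order_factor_def numeral_3_eq_3)
  moreover have "u \<le> 0.707107"
    unfolding u_def using inverse_powr_le_of_power_le[of 2 "0.707107" 2 1] by (simp add: power_divide)
  moreover have "v \<le> 0.7937006"
    unfolding v_def using inverse_powr_le_of_power_le[of 2 "0.7937006" 3 1] by (simp add: power_divide)
  moreover have "w \<le> 0.6299606"
    unfolding w_def using inverse_powr_le_of_power_le[of 2 "0.6299606" 3 2] by (simp add: power_divide)
  ultimately show ?thesis
    by (simp add: field_simps)
qed

lemma rounding_factor_weighted_le:
  "0.7624 * 2 powr (1 / 2) + 0.2376 * 2 powr (1 / 3) \<le> (1.3776::real)"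
proof -
  have "2 powr (1 / 2) \<le> (1.414214::real)"
    using powr_le_of_power_le[of 2 "1.414214" 2 1] by (simp add: power_divide)
  moreover have "2 powr (1 / 3) \<le> (1.2599211::real)"
    using powr_le_of_power_le[of 2 "1.2599211" 3 1] by (simp add: power_divide)
  ultimately show ?thesis
    by (simp add: field_simps)
qed

lemma min_le_convex_combination:
  fixes x y u v :: real
  assumes "0 \<le> u" and "0 \<le> v" and "u + v = 1"
  shows "min x y \<le> u * x + v * y"
proof -
  have "min x y = u * min x y + v * min x y"
    using assms by (simp flip: distrib_right)
  also have "\<dots> \<le> u * x + v * y"
    using assms by (intro add_mono mult_left_mono) auto
  finally show ?thesis .
qed

lemma min_Fcost_round_up_le:
  fixes m k1 k2 :: nat and w c :: real
  assumes m: "m \<ge> 2" and k1: "k1 \<ge> 1" and k2: "k2 \<ge> 1" and "0 \<le> w" and "w \<le> 1"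
    and joint: "w * joint_order_factor m k1 + (1 - w) * joint_order_factor m k2 \<le> c"
    and separable: "w * real m powr (1 / real k1) + (1 - w) * real m powr (1 / real k2) \<le> c"
    and "K0 \<ge> 0" and K_nonneg: "\<And>i. i < n \<Longrightarrow> K i \<ge> 0" and H_nonneg: "\<And>i. i < n \<Longrightarrow> H i \<ge> 0"
    and opt: "P_optimal n D K0 K H \<alpha> Tmin T"
  shows "min (Fcost K0 K H n (\<lambda>i. round_up m k1 Tmin (T i)))
             (Fcost K0 K H n (\<lambda>i. round_up m k2 Tmin (T i)))
           \<le> ereal (c * OPT_P n D K0 K H \<alpha>)"
proof -
  have Tmin: "Tmin > 0" and T_ge: "\<And>i. i < n \<Longrightarrow> T i \<ge> Tmin"
    using opt unfolding P_optimal_def P_feasible_def by auto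
  define a where "a = K0 / Tmin"
  define S where "S = (\<Sum>i<n. K i / T i + H i * T i)"
  define A where "A k = a * joint_order_factor m k + real m powr (1 / real k) * S" for k
  have "a \<ge> 0"
    unfolding a_def using \<open>K0 \<ge> 0\<close> Tmin by simp
  have "S \<ge> 0"
    unfolding S_def using K_nonneg H_nonneg T_ge Tmin
    by (intro sum_nonneg add_nonneg_nonneg) (simp_all add: order.strict_trans2 less_imp_le)
  have F: "Fcost K0 K H n (\<lambda>i. round_up m k Tmin (T i)) \<le> ereal (A k)" if "k \<ge> 1" for k
    unfolding A_def a_def S_def
    using Fcost_round_up_le[OF m that Tmin \<open>K0 \<ge> 0\<close> T_ge K_nonneg H_nonneg] .
  have "min (A k1) (A k2) \<le> w * A k1 + (1 - w) * A k2"
    using \<open>0 \<le> w\<close> \<open>w \<le> 1\<close> by (intro min_le_convex_combination) simp_all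
  also have "\<dots> = a * (w * joint_order_factor m k1 + (1 - w) * joint_order_factor m k2)
      + S * (w * real m powr (1 / real k1) + (1 - w) * real m powr (1 / real k2))"
    unfolding A_def by (simp add: algebra_simps)
  also have "\<dots> \<le> c * (a + S)"
    using mult_left_mono[OF joint \<open>a \<ge> 0\<close>] mult_left_mono[OF separable \<open>S \<ge> 0\<close>]
    by (simp add: algebra_simps)
  also have "a + S = OPT_P n D K0 K H \<alpha>"
    unfolding OPT_P_eq_P_obj[OF opt] P_obj_def a_def S_def ..
  finally have bound: "min (A k1) (A k2) \<le> c * OPT_P n D K0 K H \<alpha>" .
  have "min (Fcost K0 K H n (\<lambda>i. round_up m k1 Tmin (T i)))
            (Fcost K0 K H n (\<lambda>i. round_up m k2 Tmin (T i))) \<le> ereal (min (A k1) (A k2))"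
    using min.mono[OF F[OF k1] F[OF k2]] by simp
  also have "\<dots> \<le> ereal (c * OPT_P n D K0 K H \<alpha>)"
    using bound by (simp only: ereal_less_eq)
  finally show ?thesis .
qed

theorem lemma2p4:
  fixes n D :: nat and K0 :: real and K H :: "nat \<Rightarrow> real"
    and \<alpha> :: "nat \<Rightarrow> nat \<Rightarrow> real" and Tmin :: real and T :: "nat \<Rightarrow> real"
  assumes "n \<ge> 1" and "D \<ge> 1" and "K0 > 0"
    and "\<And>i. i < n \<Longrightarrow> K i > 0" and "\<And>i. i < n \<Longrightarrow> H i > 0"
    and "\<And>i d. i < n \<Longrightarrow> d < D \<Longrightarrow> \<alpha> i d \<ge> 0"
    and opt: "P_optimal n D K0 K H \<alpha> Tmin T"
    and "Tmin > 0"
  shows "resource_feasible n D \<alpha> (\<lambda>i. round_up 2 2 Tmin (T i))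
       \<and> resource_feasible n D \<alpha> (\<lambda>i. round_up 2 3 Tmin (T i))
       \<and> min (Fcost K0 K H n (\<lambda>i. round_up 2 2 Tmin (T i)))
             (Fcost K0 K H n (\<lambda>i. round_up 2 3 Tmin (T i)))
           \<le> ereal (1.3776 * OPT_P n D K0 K H \<alpha>)"
proof -
  have "P_feasible n D \<alpha> Tmin T"
    using opt unfolding P_optimal_def by simp
  then have T_pos: "\<And>i. i < n \<Longrightarrow> T i > 0"
    and load: "\<And>d. d < D \<Longrightarrow> (\<Sum>i<n. \<alpha> i d / T i) \<le> 1"
    unfolding P_feasible_def by (auto intro: less_le_trans)
  have feasible: "resource_feasible n D \<alpha> (\<lambda>i. round_up 2 k Tmin (T i))" if "k \<ge> 1" for k
    using resource_feasible_round_up[OF _ that \<open>Tmin > 0\<close> T_pos assms(6) load] by simp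
  have "min (Fcost K0 K H n (\<lambda>i. round_up 2 2 Tmin (T i)))
            (Fcost K0 K H n (\<lambda>i. round_up 2 3 Tmin (T i)))
          \<le> ereal (1.3776 * OPT_P n D K0 K H \<alpha>)"
    using joint_order_factor_weighted_le rounding_factor_weighted_le assms(3-5)
    by (intro min_Fcost_round_up_le[where w = "0.7624", OF _ _ _ _ _ _ _ _ _ _ opt])
      (simp_all add: less_imp_le)
  then show ?thesis
    by (intro conjI feasible) simp_all
qed

end
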